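(* Let $X$ be a finite set with similarity function $S$, suppose the target clustering $\mathcal{C}^{\ast}$ satisfies stability with respect to $S$, and let $\delta_u$ be the underclustering error of the initial clustering. In the unrestricted-merge model, in any run of the interactive algorithm using the global split procedure and the unrestricted merge procedure (described below), at most $\delta_u$ impure merge requests are issued.
   Context: For nonempty $A,A'\subseteq X$, $S(A,A')$ is the average of $S(x,y)$ over $x\in A,y\in A'$. $\mathcal{C}^{\ast}=\{C^{\ast}_1,\dots,C^{\ast}_k\}$ satisfies stability w.r.t. $S$ if for all $i\neq j$, every nonempty proper $A\subset C^{\ast}_i$ and nonempty $A'\subseteq C^{\ast}_j$: $S(A,C^{\ast}_i\setminus A)>S(A,A')$. For clusterings $\mathcal{A},\mathcal{B}$, $\mathrm{dist}(\mathcal{A},\mathcal{B})=\sum_{A\in\mathcal{A}}(|\{B\in\mathcal{B}:B\cap A\neq\emptyset\}|-1)$; the underclustering error of a clustering $\mathcal{C}$ is $\mathrm{dist}(\mathcal{C}^{\ast},\mathcal{C})$. Average-linkage tree $T_{glob}$ of $X$: leaves are singletons; repeatedly merge the two current nodes $N_1,N_2$ with largest $S(N_1,N_2)$ (ties arbitrary) into parent $N_1\cup N_2$ until the root $X$ remains. Split$(Y)$ for $|Y|\ge2$: with $N$ the deepest node of $T_{glob}$ containing $Y$ and children $N_1,N_2$, output $Y\cap N_1$, $Y\cap N_2$. Process (unrestricted-merge model): starting from the initial clustering, an oracle repeatedly issues split$(C_i)$, allowed only if current cluster $C_i$ contains points of two or more target clusters, or merge$(C_i,C_j)$ for distinct current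 clusters, allowed only if some target cluster meets both. Split procedure: replace $C_i$ by the output of Split$(C_i)$. Unrestricted merge procedure: let $C'_i,C'_j$ be the output of Split$(C_i\cup C_j)$; delete $C_i,C_j$; if $\{C'_i,C'_j\}=\{C_i,C_j\}$ add $C_i\cup C_j$, otherwise add $C'_i,C'_j$. A merge request merge$(C_i,C_j)$ is pure if $C_i$ and $C_j$ are both contained in the same target cluster, and impure otherwise. *)

theory Defs
  imports Complex_Main
begin

definition avg_sim :: "('a \<Rightarrow> 'a \<Rightarrow> real) \<Rightarrow> 'a set \<Rightarrow> 'a set \<Rightarrow> real" where
  "avg_sim S A A' = (\<Sum>x\<in>A. \<Sum>y\<in>A'. S x y) / (real (card A) * real (card A'))"

definition is_clustering :: "'a set \<Rightarrow> 'a set set \<Rightarrow> bool" where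
  "is_clustering X P \<longleftrightarrow> \<Union>P = X \<and> (\<forall>A\<in>P. A \<noteq> {}) \<and>
     (\<forall>A\<in>P. \<forall>B\<in>P. A \<noteq> B \<longrightarrow> A \<inter> B = {})"

definition target_stable :: "('a \<Rightarrow> 'a \<Rightarrow> real) \<Rightarrow> 'a set set \<Rightarrow> bool" where
  "target_stable S Cs \<longleftrightarrow> (\<forall>Ci\<in>Cs. \<forall>Cj\<in>Cs. Ci \<noteq> Cj \<longrightarrow>
     (\<forall>A A'. A \<noteq> {} \<and> A \<subset> Ci \<and> A' \<noteq> {} \<and> A' \<subseteq> Cj \<longrightarrow>
        avg_sim S A (Ci - A) > avg_sim S A A'))"

definition clust_dist :: "'a set set \<Rightarrow> 'a set set \<Rightarrow> int" where
  "clust_dist \<A> \<B> = (\<Sum>A\<in>\<A>. int (card {B\<in>\<B>. B \<inter> A \<noteq> {}}) - 1)"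

text \<open>Execution of average linkage: state = (current nodes P, all tree nodes T,
  recorded merges M as pairs of children).  Ties are broken arbitrarily.\<close>
inductive al_run :: "('a \<Rightarrow> 'a \<Rightarrow> real) \<Rightarrow> 'a set \<Rightarrow> 'a set set \<Rightarrow> 'a set set
    \<Rightarrow> ('a set \<times> 'a set) set \<Rightarrow> bool" for S X where
  init: "al_run S X {{x} | x. x \<in> X} {{x} | x. x \<in> X} {}"
| merge: "\<lbrakk> al_run S X P T M; N1 \<in> P; N2 \<in> P; N1 \<noteq> N2;
           \<forall>M1\<in>P. \<forall>M2\<in>P. M1 \<noteq> M2 \<longrightarrow> avg_sim S M1 M2 \<le> avg_sim S N1 N2 \<rbrakk>
         \<Longrightarrow> al_run S X ((P - {N1, N2}) \<union> {N1 \<union> N2}) (T \<union> {N1 \<union> N2})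
               (M \<union> {(N1, N2)})"

definition al_tree :: "('a \<Rightarrow> 'a \<Rightarrow> real) \<Rightarrow> 'a set \<Rightarrow> 'a set set
    \<Rightarrow> ('a set \<times> 'a set) set \<Rightarrow> bool" where
  "al_tree S X T M \<longleftrightarrow> (\<exists>P. al_run S X P T M \<and> (\<forall>N1\<in>P. \<forall>N2\<in>P. N1 = N2))"

text \<open>Split(Y) w.r.t. the tree (T, M): N is the deepest node containing Y,
  with children N1, N2; output Y \<inter> N1, Y \<inter> N2.\<close>
definition split_out :: "'a set set \<Rightarrow> ('a set \<times> 'a set) set \<Rightarrow> 'a set
    \<Rightarrow> 'a set \<Rightarrow> 'a set \<Rightarrow> bool" where
  "split_out T M Y A B \<longleftrightarrow> (\<exists>N1 N2. (N1, N2) \<in> M \<and> Y \<subseteq> N1 \<union> N2 \<and>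
     (\<forall>N'\<in>T. Y \<subseteq> N' \<longrightarrow> N1 \<union> N2 \<subseteq> N') \<and> A = Y \<inter> N1 \<and> B = Y \<inter> N2)"

text \<open>One oracle request and its processing (unrestricted-merge model).
  The boolean flag is True iff the step is an impure merge request.\<close>
inductive proc_step :: "'a set set \<Rightarrow> ('a set \<times> 'a set) set \<Rightarrow> 'a set set
    \<Rightarrow> 'a set set \<Rightarrow> bool \<Rightarrow> 'a set set \<Rightarrow> bool" for T M Cs where
  split: "\<lbrakk> Ci \<in> C; D1 \<in> Cs; D2 \<in> Cs; D1 \<noteq> D2; Ci \<inter> D1 \<noteq> {}; Ci \<inter> D2 \<noteq> {};
           split_out T M Ci A B \<rbrakk>
         \<Longrightarrow> proc_step T M Cs C False ((C - {Ci}) \<union> {A, B})"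
| merge: "\<lbrakk> Ci \<in> C; Cj \<in> C; Ci \<noteq> Cj; D \<in> Cs; D \<inter> Ci \<noteq> {}; D \<inter> Cj \<noteq> {};
           split_out T M (Ci \<union> Cj) A B;
           C' = (if {A, B} = {Ci, Cj} then (C - {Ci, Cj}) \<union> {Ci \<union> Cj}
                 else (C - {Ci, Cj}) \<union> {A, B});
           imp = (\<not> (\<exists>D'\<in>Cs. Ci \<subseteq> D' \<and> Cj \<subseteq> D')) \<rbrakk>
         \<Longrightarrow> proc_step T M Cs C imp C'"

inductive proc_run :: "'a set set \<Rightarrow> ('a set \<times> 'a set) set \<Rightarrow> 'a set set
    \<Rightarrow> 'a set set \<Rightarrow> 'a set set \<Rightarrow> nat \<Rightarrow> bool" for T M Cs C0 where
  start: "proc_run T M Cs C0 C0 0"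
| step: "\<lbrakk> proc_run T M Cs C0 C n; proc_step T M Cs C imp C' \<rbrakk>
         \<Longrightarrow> proc_run T M Cs C0 C' (if imp then Suc n else n)"

end

theory Submission
  imports Defs "HOL-Library.Disjoint_Sets"
begin

text \<open>Stability makes every node of the average-linkage tree compatible with the target:
  contained in one target cluster or a union of target clusters. Otherwise some node \<open>N\<^sub>1\<close>
  strictly inside a target cluster \<open>D\<close> is merged with a node \<open>N\<^sub>2\<close> outside \<open>D\<close>; but by
  stability \<open>D - N\<^sub>1\<close> is on average more similar to \<open>N\<^sub>1\<close> than \<open>N\<^sub>2\<close> is, and \<open>D - N\<^sub>1\<close>
  is a union of current nodes, one of which would then have been the better partner.
  Consequently the two halves produced by Split never meet a common target cluster unless
  the split set lies inside it. Hence no split or merge increases the underclustering error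
  \<open>dist(C\<^sup>*, C)\<close>, and an impure merge, whose two clusters meet a common target cluster
  without lying in one, decreases it by at least one. As the error starts at \<open>\<delta>\<^sub>u\<close> and is
  never negative, there are at most \<open>\<delta>\<^sub>u\<close> impure merges.\<close>

section \<open>Average similarity\<close>

lemma avg_sim_commute:
  assumes "\<And>x y. S x y = S y x"
  shows "avg_sim S A B = avg_sim S B A"
  unfolding avg_sim_def using assms by (simp add: sum.swap[of _ A] mult.commute)

lemma avg_sim_mult_card: "avg_sim S A B * card B = (\<Sum>x\<in>A. \<Sum>y\<in>B. S x y) / card A"
  unfolding avg_sim_def by (cases "card B = 0") (auto simp: card_eq_0_iff)

lemma avg_sim_Union:
  assumes "finite F" "\<forall>Q\<in>F. finite Q" "disjoint F"
  shows "avg_sim S A (\<Union>F) * card (\<Union>F) = (\<Sum>Q\<in>F. avg_sim S A Q * card Q)"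
proof -
  have "(\<Sum>x\<in>A. \<Sum>y\<in>\<Union>F. S x y) = (\<Sum>x\<in>A. \<Sum>Q\<in>F. \<Sum>y\<in>Q. S x y)"
    using assms by (simp add: sum.Union_disjoint disjoint_def)
  also have "\<dots> = (\<Sum>Q\<in>F. \<Sum>x\<in>A. \<Sum>y\<in>Q. S x y)"
    by (rule sum.swap)
  finally show ?thesis
    by (simp add: avg_sim_mult_card sum_divide_distrib)
qed

lemma avg_sim_Union_le:
  assumes "finite F" "\<forall>Q\<in>F. finite Q" "disjoint F" "\<Union>F \<noteq> {}"
    and le: "\<forall>Q\<in>F. avg_sim S A Q \<le> c"
  shows "avg_sim S A (\<Union>F) \<le> c"
proof -
  have "avg_sim S A (\<Union>F) * card (\<Union>F) = (\<Sum>Q\<in>F. avg_sim S A Q * card Q)"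
    using assms(1-3) by (rule avg_sim_Union)
  also have "\<dots> \<le> (\<Sum>Q\<in>F. c * card Q)"
    using le by (intro sum_mono mult_right_mono) auto
  also have "\<dots> = c * card (\<Union>F)"
    using assms by (simp add: card_Union_disjoint sum_distrib_left)
  finally show ?thesis
    using assms by (simp add: card_gt_0_iff)
qed

lemma avg_sim_Union_less:
  assumes "finite F" "F \<noteq> {}" "\<forall>Q\<in>F. finite Q \<and> Q \<noteq> {}" "disjoint F"
    and less: "\<forall>Q\<in>F. avg_sim S A Q < c"
  shows "avg_sim S A (\<Union>F) < c"
proof -
  have "avg_sim S A (\<Union>F) * card (\<Union>F) = (\<Sum>Q\<in>F. avg_sim S A Q * card Q)"
    using assms by (intro avg_sim_Union) auto
  also have "\<dots> < (\<Sum>Q\<in>F. c * card Q)"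
    using assms by (intro sum_strict_mono mult_strict_right_mono) (auto simp: card_gt_0_iff)
  also have "\<dots> = c * card (\<Union>F)"
    using assms by (simp add: card_Union_disjoint sum_distrib_left)
  finally show ?thesis
    using assms by (simp add: card_gt_0_iff)
qed

section \<open>Average linkage respects a stable target\<close>

lemma is_clustering_iff_partition_on: "is_clustering X P \<longleftrightarrow> partition_on X P"
  unfolding is_clustering_def partition_on_def disjoint_def by blast

lemma disjoint_replace:
  assumes "disjoint C" "R \<subseteq> C" "disjoint N" "\<Union>N = \<Union>R"
  shows "disjoint ((C - R) \<union> N)"
proof (rule disjoint_union)
  show "disjoint (C - R)"
    using assms(1) by (rule pairwise_subset) blast
  show "\<Union>(C - R) \<inter> \<Union>N = {}"
  proof (rule ccontr)
    assume "\<Union>(C - R) \<inter> \<Union>N \<noteq> {}"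
    then obtain Q Q' x where "Q \<in> C - R" "Q' \<in> R" "x \<in> Q" "x \<in> Q'"
      using assms(4) by blast
    with disjointD[OF assms(1), of Q Q'] assms(2) show False
      by blast
  qed
qed (fact assms(3))

lemma partition_on_merge:
  assumes P: "partition_on X P" and "N1 \<in> P" "N2 \<in> P"
  shows "partition_on X (P - {N1, N2} \<union> {N1 \<union> N2})"
  unfolding partition_on_def
proof (intro conjI)
  have "\<Union>(P - {N1, N2} \<union> {N1 \<union> N2}) = \<Union>P"
    using assms(2,3) by blast
  then show "\<Union>(P - {N1, N2} \<union> {N1 \<union> N2}) = X"
    using partition_onD1[OF P] by simp
  show "disjoint (P - {N1, N2} \<union> {N1 \<union> N2})"
    using assms(2,3) by (intro disjoint_replace[OF partition_onD2[OF P]]) simp_all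
  show "{} \<notin> P - {N1, N2} \<union> {N1 \<union> N2}"
    using partition_onD3[OF P] assms(2) by auto
qed

lemma target_stable_avg_sim_less:
  assumes Cs: "is_clustering X Cs" and "finite X" and stable: "target_stable S Cs"
    and D: "D \<in> Cs" and A: "A \<noteq> {}" "A \<subset> D"
    and B: "B \<noteq> {}" "B \<subseteq> X" "B \<inter> D = {}"
  shows "avg_sim S A B < avg_sim S A (D - A)"
proof -
  define F where "F = (\<inter>) B ` Cs - {{}}"
  have part: "partition_on X Cs"
    using Cs by (simp add: is_clustering_iff_partition_on)
  then have F: "partition_on B F"
    using partition_on_restrict[OF part, of B] B(2) by (simp add: F_def Int_absorb2)
  have "avg_sim S A (\<Union>F) < avg_sim S A (D - A)"
  proof (rule avg_sim_Union_less)
    show "finite F"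
      using finite_elements[OF \<open>finite X\<close> part] by (simp add: F_def)
    have "finite B"
      using B(2) \<open>finite X\<close> by (rule finite_subset)
    then show "F \<noteq> {}" "\<forall>Q\<in>F. finite Q \<and> Q \<noteq> {}" "disjoint F"
      using F B(1) unfolding partition_on_def by (auto intro: rev_finite_subset)
    show "\<forall>Q\<in>F. avg_sim S A Q < avg_sim S A (D - A)"
    proof
      fix Q assume "Q \<in> F"
      then obtain D' where D': "D' \<in> Cs" "Q = B \<inter> D'" "Q \<noteq> {}"
        by (auto simp: F_def)
      with B(3) have "D \<noteq> D'" by blast
      then show "avg_sim S A Q < avg_sim S A (D - A)"
        using stable[unfolded target_stable_def, rule_format, OF D D'(1), of A Q] A D' by blast
    qed
  qed
  then show ?thesis
    using F by (simp add: partition_on_def)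
qed

definition target_compatible :: "'a set set \<Rightarrow> 'a set \<Rightarrow> bool" where
  "target_compatible Cs Q \<longleftrightarrow> (\<exists>D\<in>Cs. Q \<subseteq> D) \<or> (\<forall>D\<in>Cs. D \<subseteq> Q \<or> D \<inter> Q = {})"

lemma target_compatible_meet:
  assumes "target_compatible Cs Q" "disjoint Cs" "D \<in> Cs" "Q \<inter> D \<noteq> {}"
  shows "Q \<subseteq> D \<or> D \<subseteq> Q"
proof (cases "\<exists>D'\<in>Cs. Q \<subseteq> D'")
  case True
  then obtain D' where "D' \<in> Cs" "Q \<subseteq> D'" by blast
  with assms(2-4) have "D' = D"
    unfolding disjoint_def by blast
  with \<open>Q \<subseteq> D'\<close> show ?thesis by simp
next
  case False
  with assms(1,3,4) show ?thesis
    unfolding target_compatible_def by blast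
qed

lemma not_target_compatible_Un:
  assumes "target_compatible Cs N1" "target_compatible Cs N2" "disjoint Cs"
    and "\<not> target_compatible Cs (N1 \<union> N2)"
  obtains D where "D \<in> Cs" "N1 \<subset> D" "N2 \<inter> D = {}"
    | D where "D \<in> Cs" "N2 \<subset> D" "N1 \<inter> D = {}"
proof -
  obtain D where D: "D \<in> Cs" "\<not> D \<subseteq> N1 \<union> N2" "D \<inter> (N1 \<union> N2) \<noteq> {}" "\<not> N1 \<union> N2 \<subseteq> D"
    using assms(4) unfolding target_compatible_def by blast
  have "N1 \<subseteq> D" if "N1 \<inter> D \<noteq> {}"
    using target_compatible_meet[OF assms(1,3) D(1) that] D(2) by blast
  moreover have "N2 \<subseteq> D" if "N2 \<inter> D \<noteq> {}"
    using target_compatible_meet[OF assms(2,3) D(1) that] D(2) by blast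
  ultimately consider "N1 \<subset> D" "N2 \<inter> D = {}" | "N2 \<subset> D" "N1 \<inter> D = {}"
    using D(2-4) by blast
  then show thesis
    using D(1) that by metis
qed

lemma compatible_partition_pieces_Diff:
  assumes Cs: "disjoint Cs" and P: "partition_on X P" "\<forall>Q\<in>P. target_compatible Cs Q"
    and N: "N \<in> P" and D: "D \<in> Cs" "N \<subset> D" "D \<subseteq> X"
  shows "partition_on (D - N) {Q\<in>P. Q \<subseteq> D - N}"
proof -
  have Nne: "N \<noteq> {}"
    using partition_onD3[OF P(1)] N by blast
  have inside: "Q \<subseteq> D - N" if Q: "Q \<in> P" "x \<in> Q" "x \<in> D - N" for Q x
  proof -
    have "Q \<noteq> N"
      using Q(2,3) by blast
    then have "Q \<inter> N = {}"
      using disjointD[OF partition_onD2[OF P(1)] Q(1) N] by simp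
    moreover have "Q \<inter> D \<noteq> {}"
      using Q(2,3) by blast
    then have "Q \<subseteq> D \<or> D \<subseteq> Q"
      using target_compatible_meet[OF bspec[OF P(2) Q(1)] Cs D(1)] by simp
    ultimately show ?thesis
      using D(2) Nne by blast
  qed
  have "D - N \<subseteq> \<Union>{Q\<in>P. Q \<subseteq> D - N}"
  proof
    fix x assume x: "x \<in> D - N"
    then obtain Q where "Q \<in> P" "x \<in> Q"
      using D(3) partition_onD1[OF P(1)] by blast
    then show "x \<in> \<Union>{Q\<in>P. Q \<subseteq> D - N}"
      using inside[of Q x] x by blast
  qed
  then have "\<Union>{Q\<in>P. Q \<subseteq> D - N} = D - N"
    by blast
  moreover have "disjoint {Q\<in>P. Q \<subseteq> D - N}"
    using partition_onD2[OF P(1)] by (rule pairwise_subset) blast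
  moreover have "{} \<notin> {Q\<in>P. Q \<subseteq> D - N}"
    using partition_onD3[OF P(1)] by blast
  ultimately show ?thesis
    unfolding partition_on_def by blast
qed

lemma compatible_partition_better_partner:
  assumes Cs: "is_clustering X Cs" and "finite X" and stable: "target_stable S Cs"
    and P: "partition_on X P" "\<forall>Q\<in>P. target_compatible Cs Q"
    and N: "N1 \<in> P" "N2 \<in> P" and D: "D \<in> Cs" "N1 \<subset> D" "N2 \<inter> D = {}"
  obtains Q where "Q \<in> P" "Q \<noteq> N1" "avg_sim S N1 N2 < avg_sim S N1 Q"
proof -
  have DX: "D \<subseteq> X"
    using Cs D(1) unfolding is_clustering_def by blast
  have Csd: "disjoint Cs"
    using Cs by (simp add: is_clustering_iff_partition_on partition_on_def)
  have N1ne: "N1 \<noteq> {}"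
    using partition_onD3[OF P(1)] N(1) by blast
  define F where "F = {Q\<in>P. Q \<subseteq> D - N1}"
  have F: "partition_on (D - N1) F"
    unfolding F_def using compatible_partition_pieces_Diff[OF Csd P N(1) D(1,2) DX] .
  have FP: "F \<subseteq> P - {N1}"
    using N1ne unfolding F_def by blast
  have "avg_sim S N1 N2 < avg_sim S N1 (D - N1)"
  proof (rule target_stable_avg_sim_less[OF Cs \<open>finite X\<close> stable D(1) _ D(2) _ _ D(3)])
    show "N1 \<noteq> {}" "N2 \<noteq> {}" "N2 \<subseteq> X"
      using P(1) N N1ne unfolding partition_on_def by blast+
  qed
  moreover have "avg_sim S N1 (D - N1) \<le> avg_sim S N1 N2"
    if le: "\<forall>Q\<in>F. avg_sim S N1 Q \<le> avg_sim S N1 N2"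
  proof -
    have fin: "finite (D - N1)"
      using DX \<open>finite X\<close> by (meson Diff_subset finite_subset)
    have "avg_sim S N1 (\<Union>F) \<le> avg_sim S N1 N2"
    proof (rule avg_sim_Union_le[OF finite_elements[OF fin F] _ partition_onD2[OF F] _ le])
      show "\<forall>Q\<in>F. finite Q"
        using partition_onD1[OF F] fin by (metis Union_upper rev_finite_subset)
      show "\<Union>F \<noteq> {}"
        using partition_onD1[OF F] D(2) by blast
    qed
    then show ?thesis
      using partition_onD1[OF F] by simp
  qed
  ultimately have "\<not> (\<forall>Q\<in>F. avg_sim S N1 Q \<le> avg_sim S N1 N2)"
    by linarith
  then obtain Q where "Q \<in> F" "avg_sim S N1 N2 < avg_sim S N1 Q"
    by (auto simp: not_le)
  with FP that show thesis by blast
qed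

lemma average_linkage_merge_target_compatible:
  assumes Cs: "is_clustering X Cs" "finite X" "target_stable S Cs"
    and sym: "\<And>x y. S x y = S y x"
    and P: "partition_on X P" "\<forall>Q\<in>P. target_compatible Cs Q"
    and N: "N1 \<in> P" "N2 \<in> P" "N1 \<noteq> N2"
    and max: "\<forall>M1\<in>P. \<forall>M2\<in>P. M1 \<noteq> M2 \<longrightarrow> avg_sim S M1 M2 \<le> avg_sim S N1 N2"
  shows "target_compatible Cs (N1 \<union> N2)"
proof (rule ccontr)
  have Csd: "disjoint Cs"
    using Cs(1) by (simp add: is_clustering_iff_partition_on partition_on_def)
  assume "\<not> target_compatible Cs (N1 \<union> N2)"
  from not_target_compatible_Un[OF bspec[OF P(2) N(1)] bspec[OF P(2) N(2)] Csd this]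
  show False
  proof cases
    case (1 D)
    obtain Q where "Q \<in> P" "Q \<noteq> N1" "avg_sim S N1 N2 < avg_sim S N1 Q"
      by (rule compatible_partition_better_partner[OF Cs P N(1,2) 1])
    with max N(1) show False
      by fastforce
  next
    case (2 D)
    obtain Q where "Q \<in> P" "Q \<noteq> N2" "avg_sim S N2 N1 < avg_sim S N2 Q"
      by (rule compatible_partition_better_partner[OF Cs P N(2,1) 2])
    with max N(2) avg_sim_commute[OF sym, where A=N2 and B=N1] show False
      by fastforce
  qed
qed

definition compatible_merges :: "'a set set \<Rightarrow> ('a set \<times> 'a set) set \<Rightarrow> bool" where
  "compatible_merges Cs M \<longleftrightarrow>
     (\<forall>(N1, N2)\<in>M. N1 \<inter> N2 = {} \<and> target_compatible Cs N1 \<and> target_compatible Cs N2)"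

lemma al_run_target_compatible:
  assumes "al_run S X P T M" and Cs: "is_clustering X Cs" "finite X" "target_stable S Cs"
    and sym: "\<And>x y. S x y = S y x"
  shows "partition_on X P \<and> (\<forall>Q\<in>P. target_compatible Cs Q) \<and> compatible_merges Cs M"
  using assms(1)
proof (induction rule: al_run.induct)
  case init
  have "{{x} | x. x \<in> X} = (\<lambda>x. {x}) ` X"
    by blast
  then have "partition_on X {{x} | x. x \<in> X}"
    using partition_on_singletons[of X] by simp
  moreover have "target_compatible Cs {x}" if "x \<in> X" for x
    using that Cs(1) unfolding is_clustering_def target_compatible_def by blast
  ultimately show ?case
    unfolding compatible_merges_def by blast
next
  case (merge P T M N1 N2)
  then have P: "partition_on X P" "\<forall>Q\<in>P. target_compatible Cs Q"
    and M: "compatible_merges Cs M"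
    by simp_all
  have disj: "N1 \<inter> N2 = {}"
    using disjointD[OF partition_onD2[OF P(1)] merge.hyps(2-4)] .
  have compat: "target_compatible Cs (N1 \<union> N2)"
    using average_linkage_merge_target_compatible[OF Cs sym P merge.hyps(2-5)] .
  have "partition_on X (P - {N1, N2} \<union> {N1 \<union> N2})"
    using partition_on_merge[OF P(1) merge.hyps(2,3)] .
  moreover have "\<forall>Q\<in>P - {N1, N2} \<union> {N1 \<union> N2}. target_compatible Cs Q"
    using P(2) compat by blast
  moreover have "compatible_merges Cs (M \<union> {(N1, N2)})"
    using M disj P(2) merge.hyps(2,3) unfolding compatible_merges_def by blast
  ultimately show ?case
    by blast
qed

section \<open>The underclustering error as a potential\<close>

definition clean_split :: "'a set set \<Rightarrow> 'a set \<Rightarrow> 'a set \<Rightarrow> 'a set \<Rightarrow> bool" where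
  "clean_split Cs Y A B \<longleftrightarrow>
     A \<union> B = Y \<and> A \<inter> B = {} \<and> (\<forall>E\<in>Cs. A \<inter> E \<noteq> {} \<longrightarrow> B \<inter> E \<noteq> {} \<longrightarrow> Y \<subseteq> E)"

lemma split_out_clean_split:
  assumes M: "compatible_merges Cs M" and Cs: "disjoint Cs" and split: "split_out T M Y A B"
  shows "clean_split Cs Y A B"
proof -
  obtain N1 N2 where N: "(N1, N2) \<in> M" "Y \<subseteq> N1 \<union> N2" "A = Y \<inter> N1" "B = Y \<inter> N2"
    using split unfolding split_out_def by blast
  then have disj: "N1 \<inter> N2 = {}"
    and compat: "target_compatible Cs N1" "target_compatible Cs N2"
    using M unfolding compatible_merges_def by auto
  have "Y \<subseteq> E" if E: "E \<in> Cs" "A \<inter> E \<noteq> {}" "B \<inter> E \<noteq> {}" for E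
  proof -
    have meet: "N1 \<inter> E \<noteq> {}" "N2 \<inter> E \<noteq> {}"
      using E(2,3) N(3,4) by blast+
    have "N1 \<subseteq> E"
      using target_compatible_meet[OF compat(1) Cs E(1) meet(1)] meet(2) disj by blast
    moreover have "N2 \<subseteq> E"
      using target_compatible_meet[OF compat(2) Cs E(1) meet(2)] meet(1) disj by blast
    ultimately show ?thesis
      using N(2) by blast
  qed
  with N disj show ?thesis
    unfolding clean_split_def by blast
qed

definition meeting :: "'a set set \<Rightarrow> 'a set \<Rightarrow> 'a set set" where
  "meeting K D = {B\<in>K. B \<inter> D \<noteq> {}}"

lemma clust_dist_meeting: "clust_dist Cs C = (\<Sum>D\<in>Cs. int (card (meeting C D)) - 1)"
  unfolding clust_dist_def meeting_def ..

lemma meeting_empty: "meeting {} E = {}"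
  by (simp add: meeting_def)

lemma meeting_insert:
  "meeting (insert A K) E = (if A \<inter> E = {} then meeting K E else insert A (meeting K E))"
  by (auto simp: meeting_def)

lemma card_meeting_pair_le_Un:
  assumes "\<not> (A \<inter> E \<noteq> {} \<and> B \<inter> E \<noteq> {})"
  shows "card (meeting {A, B} E) \<le> card (meeting {A \<union> B} E)"
  using assms by (auto simp: meeting_empty meeting_insert Int_Un_distrib2)

lemma card_meeting_Un_le_pair: "card (meeting {A \<union> B} E) \<le> card (meeting {A, B} E)"
  by (auto simp: meeting_empty meeting_insert Int_Un_distrib2 card_insert_if)

lemma card_meeting_Un_less_pair:
  assumes "A \<noteq> B" "A \<inter> E \<noteq> {}" "B \<inter> E \<noteq> {}"
  shows "card (meeting {A \<union> B} E) < card (meeting {A, B} E)"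
  using assms by (auto simp: meeting_empty meeting_insert Int_Un_distrib2)

lemma card_meeting_replace:
  assumes "finite C" "R \<subseteq> C" "finite N"
  shows "card (meeting ((C - R) \<union> N) E) + card (meeting R E)
    \<le> card (meeting C E) + card (meeting N E)"
proof -
  have fin: "finite (meeting (C - R) E)" "finite (meeting R E)"
    using assms finite_subset unfolding meeting_def by fastforce+
  have "meeting ((C - R) \<union> N) E = meeting (C - R) E \<union> meeting N E"
    by (auto simp: meeting_def)
  then have new: "card (meeting ((C - R) \<union> N) E) \<le> card (meeting (C - R) E) + card (meeting N E)"
    by (simp add: card_Un_le)
  have "meeting C E = meeting (C - R) E \<union> meeting R E"
    "meeting (C - R) E \<inter> meeting R E = {}"
    using assms(2) by (auto simp: meeting_def)
  then have old: "card (meeting C E) = card (meeting (C - R) E) + card (meeting R E)"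
    using fin by (simp add: card_Un_disjoint)
  from new old show ?thesis
    by linarith
qed

lemma clust_dist_replace:
  assumes "finite Cs" "finite C" "R \<subseteq> C" "finite N"
    and le: "\<forall>E\<in>Cs. card (meeting N E) \<le> card (meeting R E)"
    and less: "imp \<longrightarrow> (\<exists>E\<in>Cs. card (meeting N E) < card (meeting R E))"
  shows "clust_dist Cs ((C - R) \<union> N) + (if imp then 1 else 0) \<le> clust_dist Cs C"
proof -
  have pointwise: "card (meeting ((C - R) \<union> N) E) + card (meeting R E)
      \<le> card (meeting C E) + card (meeting N E)" for E
    using card_meeting_replace[OF assms(2-4)] .
  let ?f = "\<lambda>K E. int (card (meeting K E)) - 1"
  have mono: "\<forall>E\<in>Cs. ?f ((C - R) \<union> N) E \<le> ?f C E"
  proof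
    fix E assume "E \<in> Cs"
    with le pointwise[of E] show "?f ((C - R) \<union> N) E \<le> ?f C E"
      by fastforce
  qed
  show ?thesis
  proof (cases imp)
    case True
    then obtain E where "E \<in> Cs" "card (meeting N E) < card (meeting R E)"
      using less by blast
    with pointwise[of E] have "E \<in> Cs" "?f ((C - R) \<union> N) E < ?f C E"
      by auto
    then have "sum (?f ((C - R) \<union> N)) Cs < sum (?f C) Cs"
      using sum_strict_mono_ex1[OF assms(1) mono] by blast
    with True show ?thesis
      by (simp add: clust_dist_meeting)
  next
    case False
    with mono show ?thesis
      by (simp add: clust_dist_meeting sum_mono)
  qed
qed

lemma clean_split_meeting_le:
  assumes "clean_split Cs Y A B" "E \<in> Cs" "\<not> Y \<subseteq> E"
  shows "card (meeting {A, B} E) \<le> card (meeting {Y} E)"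
proof -
  have "\<not> (A \<inter> E \<noteq> {} \<and> B \<inter> E \<noteq> {})" "A \<union> B = Y"
    using assms unfolding clean_split_def by blast+
  then show ?thesis
    using card_meeting_pair_le_Un by metis
qed

lemma merge_meeting_le:
  assumes split: "clean_split Cs (Ci \<union> Cj) A B" and E: "E \<in> Cs"
    and ne: "Ci \<noteq> Cj" "Ci \<noteq> {}" "Cj \<noteq> {}"
    and N: "N = (if {A, B} = {Ci, Cj} then {Ci \<union> Cj} else {A, B})"
  shows "card (meeting N E) \<le> card (meeting {Ci, Cj} E)"
    and "\<not> Ci \<union> Cj \<subseteq> E \<Longrightarrow> Ci \<inter> E \<noteq> {} \<Longrightarrow> Cj \<inter> E \<noteq> {}
      \<Longrightarrow> card (meeting N E) < card (meeting {Ci, Cj} E)"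
proof -
  have outside: "card (meeting N E) \<le> card (meeting {Ci \<union> Cj} E)" if "\<not> Ci \<union> Cj \<subseteq> E"
    using clean_split_meeting_le[OF split E that] N by (cases "{A, B} = {Ci, Cj}") simp_all
  show "card (meeting N E) \<le> card (meeting {Ci, Cj} E)"
  proof (cases "Ci \<union> Cj \<subseteq> E")
    case True
    then have "meeting {Ci, Cj} E = {Ci, Cj}"
      using ne by (auto simp: meeting_def)
    moreover have "card (meeting N E) \<le> card N"
      unfolding meeting_def using N by (intro card_mono) auto
    moreover have "card N \<le> 2"
      using N by (simp add: card_insert_if)
    ultimately show ?thesis
      using ne(1) by simp
  next
    case False
    then show ?thesis
      using outside card_meeting_Un_le_pair[of Ci Cj E] by linarith
  qed
  show "card (meeting N E) < card (meeting {Ci, Cj} E)"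
    if "\<not> Ci \<union> Cj \<subseteq> E" "Ci \<inter> E \<noteq> {}" "Cj \<inter> E \<noteq> {}"
    using outside[OF that(1)] card_meeting_Un_less_pair[OF ne(1) that(2,3)] by linarith
qed

lemma proc_step_replacement:
  assumes step: "proc_step T M Cs C imp C'" and M: "compatible_merges Cs M" and Cs: "disjoint Cs"
  obtains R N where "R \<subseteq> C" "C' = (C - R) \<union> N" "finite N" "disjoint N" "\<Union>N = \<Union>R"
    "\<forall>E\<in>Cs. card (meeting N E) \<le> card (meeting R E)"
    "imp \<longrightarrow> (\<exists>E\<in>Cs. card (meeting N E) < card (meeting R E))"
  using step
proof cases
  case (split Ci D1 D2 A B)
  have clean: "clean_split Cs Ci A B"
    using split_out_clean_split[OF M Cs split(9)] .
  have "\<not> Ci \<subseteq> E" if "E \<in> Cs" for E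
  proof
    assume "Ci \<subseteq> E"
    with split(7,8) have "D1 \<inter> E \<noteq> {}" "D2 \<inter> E \<noteq> {}"
      by blast+
    with disjointD[OF Cs split(4) that] disjointD[OF Cs split(5) that] split(6)
    show False by blast
  qed
  then have "\<forall>E\<in>Cs. card (meeting {A, B} E) \<le> card (meeting {Ci} E)"
    using clean_split_meeting_le[OF clean] by blast
  moreover have "disjoint {A, B}" "\<Union>{A, B} = \<Union>{Ci}"
    using clean unfolding clean_split_def disjoint_def by auto
  ultimately show thesis
    using that[of "{Ci}" "{A, B}"] split(1-3) by simp
next
  case (merge Ci Cj D A B)
  define N where "N = (if {A, B} = {Ci, Cj} then {Ci \<union> Cj} else {A, B})"
  have clean: "clean_split Cs (Ci \<union> Cj) A B"
    using split_out_clean_split[OF M Cs merge(7)] .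
  have ne: "Ci \<noteq> {}" "Cj \<noteq> {}"
    using merge(5,6) by blast+
  have "\<forall>E\<in>Cs. card (meeting N E) \<le> card (meeting {Ci, Cj} E)"
    using merge_meeting_le(1)[OF clean _ merge(3) ne N_def] by blast
  moreover have "imp \<longrightarrow> (\<exists>E\<in>Cs. card (meeting N E) < card (meeting {Ci, Cj} E))"
  proof
    assume imp
    then have "\<not> Ci \<union> Cj \<subseteq> D"
      using merge(4,9) by blast
    then have "card (meeting N D) < card (meeting {Ci, Cj} D)"
      using merge_meeting_le(2)[OF clean merge(4) merge(3) ne N_def] merge(5,6)
      by (simp add: Int_commute)
    with merge(4) show "\<exists>E\<in>Cs. card (meeting N E) < card (meeting {Ci, Cj} E)" ..
  qed
  moreover have "A \<union> B = Ci \<union> Cj" "A \<inter> B = {}"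
    using clean unfolding clean_split_def by blast+
  then have "finite N" "disjoint N" "\<Union>N = \<Union>{Ci, Cj}"
    unfolding N_def disjoint_def by auto
  moreover have "C' = (C - {Ci, Cj}) \<union> N"
    using merge(8) by (simp add: N_def)
  ultimately show thesis
    using that[of "{Ci, Cj}" N] merge(1,2) by simp
qed

lemma proc_step_clust_dist:
  assumes step: "proc_step T M Cs C imp C'" and M: "compatible_merges Cs M"
    and Cs: "is_clustering X Cs" "finite X" and C: "\<Union>C = X" "disjoint C"
  shows "\<Union>C' = X \<and> disjoint C' \<and> clust_dist Cs C' + (if imp then 1 else 0) \<le> clust_dist Cs C"
proof -
  have Csd: "disjoint Cs" and finCs: "finite Cs"
    using Cs finite_elements unfolding is_clustering_iff_partition_on partition_on_def by blast+
  have finC: "finite C"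
    using C(1) Cs(2) by (metis finite_UnionD)
  obtain R N where R: "R \<subseteq> C" "C' = (C - R) \<union> N" "finite N" "disjoint N" "\<Union>N = \<Union>R"
    and le: "\<forall>E\<in>Cs. card (meeting N E) \<le> card (meeting R E)"
    and less: "imp \<longrightarrow> (\<exists>E\<in>Cs. card (meeting N E) < card (meeting R E))"
    by (rule proc_step_replacement[OF step M Csd])
  have "\<Union>C' = X"
    using R(1,2,5) C(1) by blast
  moreover have "disjoint C'"
    using disjoint_replace[OF C(2) R(1,4,5)] R(2) by simp
  moreover have "clust_dist Cs C' + (if imp then 1 else 0) \<le> clust_dist Cs C"
    using clust_dist_replace[OF finCs finC R(1,3) le less] R(2) by simp
  ultimately show ?thesis
    by blast
qed

lemma proc_run_clust_dist:
  assumes "proc_run T M Cs C0 C n" and M: "compatible_merges Cs M"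
    and Cs: "is_clustering X Cs" "finite X" and C0: "is_clustering X C0"
  shows "\<Union>C = X \<and> disjoint C \<and> clust_dist Cs C + int n \<le> clust_dist Cs C0"
  using assms(1)
proof (induction rule: proc_run.induct)
  case start
  then show ?case
    using C0 by (simp add: is_clustering_iff_partition_on partition_on_def)
next
  case (step C n imp C')
  then show ?case
    using proc_step_clust_dist[OF step.hyps(2) M Cs] by (cases imp) auto
qed

lemma clust_dist_nonneg:
  assumes Cs: "is_clustering X Cs" and "finite C" "\<Union>C = X"
  shows "0 \<le> clust_dist Cs C"
  unfolding clust_dist_meeting
proof (rule sum_nonneg)
  fix D assume "D \<in> Cs"
  then have "D \<noteq> {}" "D \<subseteq> X"
    using Cs unfolding is_clustering_def by auto
  with \<open>\<Union>C = X\<close> have "meeting C D \<noteq> {}"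
    unfolding meeting_def by blast
  with \<open>finite C\<close> show "0 \<le> int (card (meeting C D)) - 1"
    by (simp add: meeting_def card_gt_0_iff Suc_le_eq)
qed

theorem lemma23:
  fixes X :: "'a set" and S :: "'a \<Rightarrow> 'a \<Rightarrow> real"
    and Cs C0 C :: "'a set set"
    and T :: "'a set set" and M :: "('a set \<times> 'a set) set" and n :: nat
  assumes "finite X"
    and "\<And>x y. S x y = S y x"
    and "is_clustering X Cs"
    and "target_stable S Cs"
    and "is_clustering X C0"
    and "al_tree S X T M"
    and "proc_run T M Cs C0 C n"
  shows "int n \<le> clust_dist Cs C0"
proof -
  obtain P where "al_run S X P T M"
    using assms(6) unfolding al_tree_def by blast
  then have "compatible_merges Cs M"
    using al_run_target_compatible[OF _ assms(3,1,4,2)] by blast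
  then have C: "\<Union>C = X" "clust_dist Cs C + int n \<le> clust_dist Cs C0"
    using proc_run_clust_dist[OF assms(7) _ assms(3,1,5)] by simp_all
  moreover have "0 \<le> clust_dist Cs C"
    using clust_dist_nonneg[OF assms(3) _ C(1)] C(1) assms(1) by (metis finite_UnionD)
  ultimately show ?thesis
    by linarith
qed

end
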